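(* Let $G=(V,E)$ be a finite simple graph. (i) If $x$ is a tree-like vertex of $G$ and $y\ne x$ is any vertex, then $x$ is a tree-like vertex of the graph obtained from $G$ by removing $y$ and its incident edges. (ii) If $Y\subseteq V$ is a set of tree-like vertices of $G$ and $G'$ is the induced subgraph of $G$ on $V\setminus Y$, then $\ell(G')=\ell(G)$.
   Context: A vertex $x$ of degree $d_x$ is tree-like if removing $x$ and its incident edges from $G$ increases the number of connected components by $d_x-1$. For a graph $H$, $\ell(H)=|E(H)|-|V(H)|+c(H)$, where $c(H)$ is the number of connected components of $H$. *)

theory Defs
  imports Main
begin

definition simple_graph :: "'a set \<Rightarrow> 'a set set \<Rightarrow> bool" where
  "simple_graph V E \<longleftrightarrow> finite V \<and>
     (\<forall>e\<in>E. \<exists>u v. e = {u, v} \<and> u \<noteq> v \<and> u \<in> V \<and> v \<in> V)"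

definition adj :: "'a set \<Rightarrow> 'a set set \<Rightarrow> 'a \<Rightarrow> 'a \<Rightarrow> bool" where
  "adj V E u v \<longleftrightarrow> u \<in> V \<and> v \<in> V \<and> {u, v} \<in> E"

definition components :: "'a set \<Rightarrow> 'a set set \<Rightarrow> 'a set set" where
  "components V E = (\<lambda>u. {v. (adj V E)\<^sup>*\<^sup>* u v}) ` V"

definition num_components :: "'a set \<Rightarrow> 'a set set \<Rightarrow> nat" where
  "num_components V E = card (components V E)"

definition degree :: "'a set set \<Rightarrow> 'a \<Rightarrow> nat" where
  "degree E x = card {e\<in>E. x \<in> e}"

definition del_vertex_V :: "'a set \<Rightarrow> 'a \<Rightarrow> 'a set" where
  "del_vertex_V V x = V - {x}"

definition del_vertex_E :: "'a set set \<Rightarrow> 'a \<Rightarrow> 'a set set" where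
  "del_vertex_E E x = {e\<in>E. x \<notin> e}"

definition induced_E :: "'a set set \<Rightarrow> 'a set \<Rightarrow> 'a set set" where
  "induced_E E W = {e\<in>E. e \<subseteq> W}"

text \<open>Tree-like vertex: removing x increases the number of components by d_x - 1
  (computed over the integers, so an isolated vertex decreases it by 1).\<close>
definition tree_like :: "'a set \<Rightarrow> 'a set set \<Rightarrow> 'a \<Rightarrow> bool" where
  "tree_like V E x \<longleftrightarrow> x \<in> V \<and>
     int (num_components (del_vertex_V V x) (del_vertex_E E x))
       = int (num_components V E) + int (degree E x) - 1"

definition ell :: "'a set \<Rightarrow> 'a set set \<Rightarrow> int" where
  "ell V E = int (card E) - int (card V) + int (num_components V E)"

end

theory Submission
  imports Defs
begin

text \<open>\<open>\<ell>\<close> is the cycle rank: adding an edge raises it by one if its endpoints are already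
  connected and leaves it unchanged otherwise. Hence \<open>\<ell>\<close> is monotone in the edge set, and a
  set of new edges raises \<open>\<ell>\<close> at least as much on top of a larger edge set as on top of a
  smaller one. Keeping \<open>x\<close> as an isolated vertex does not affect \<open>\<ell>\<close>, so \<open>x\<close> is tree-like
  iff deleting the edges at \<open>x\<close> leaves \<open>\<ell>\<close> unchanged. For (i), the edges at \<open>x\<close> in \<open>G - y\<close>
  are added on top of a smaller edge set than in \<open>G\<close>, so they raise \<open>\<ell>\<close> by at most as much,
  that is, by nothing. Part (ii) follows by deleting the vertices of \<open>Y\<close> one at a time, (i)
  keeping the remaining ones tree-like.\<close>

abbreviation reachable :: "'a set \<Rightarrow> 'a set set \<Rightarrow> 'a \<Rightarrow> 'a \<Rightarrow> bool" where
  "reachable V F \<equiv> (adj V F)\<^sup>*\<^sup>*"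

abbreviation component_of :: "'a set \<Rightarrow> 'a set set \<Rightarrow> 'a \<Rightarrow> 'a set" where
  "component_of V F a \<equiv> {b. reachable V F a b}"

lemma reachable_sym: "reachable V F a b \<Longrightarrow> reachable V F b a"
proof -
  have "symp (adj V F)" by (auto intro: sympI simp: adj_def insert_commute)
  then show "reachable V F a b \<Longrightarrow> reachable V F b a"
    by (meson symp_rtranclp sympD)
qed

lemma reachable_mono: "F \<subseteq> F' \<Longrightarrow> reachable V F a b \<Longrightarrow> reachable V F' a b"
  by (erule rtranclp_mono[THEN predicate2D, rotated]) (auto simp: adj_def)

lemma component_of_eq_iff: "component_of V F a = component_of V F b \<longleftrightarrow> reachable V F a b"
  by (auto intro: rtranclp_trans reachable_sym)

lemma reachable_insert_edge:
  assumes "u \<in> V" "v \<in> V"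
  shows "reachable V (insert {u,v} F) a b \<longleftrightarrow>
     reachable V F a b \<or> (reachable V F a u \<and> reachable V F v b) \<or>
     (reachable V F a v \<and> reachable V F u b)"
proof
  assume "reachable V (insert {u,v} F) a b"
  then show "reachable V F a b \<or> (reachable V F a u \<and> reachable V F v b) \<or>
     (reachable V F a v \<and> reachable V F u b)"
  proof (induction rule: rtranclp_induct)
    case (step b c)
    then have "adj V F b c \<or> {b, c} = {u, v}"
      by (auto simp: adj_def)
    then show ?case
      using step.IH by (auto simp: doubleton_eq_iff intro: rtranclp.rtrancl_into_rtrancl)
  qed simp
next
  have "reachable V (insert {u,v} F) u v" "reachable V (insert {u,v} F) v u"
    using assms by (auto simp: adj_def insert_commute)
  then show "reachable V F a b \<or> (reachable V F a u \<and> reachable V F v b) \<or>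
     (reachable V F a v \<and> reachable V F u b) \<Longrightarrow> reachable V (insert {u,v} F) a b"
    using reachable_mono[of F "insert {u,v} F"] by (meson rtranclp_trans subset_insertI)
qed

lemma component_of_insert_edge:
  assumes "u \<in> V" "v \<in> V"
  shows "component_of V (insert {u,v} F) a =
    (if reachable V F a u \<or> reachable V F a v
     then component_of V F u \<union> component_of V F v else component_of V F a)"
  using reachable_insert_edge[OF assms]
  by (auto intro: rtranclp_trans reachable_sym)

lemma components_insert_edge:
  fixes F :: "'a set set"
  assumes "u \<in> V" "v \<in> V"
  defines "Cu \<equiv> component_of V F u" and "Cv \<equiv> component_of V F v"
  shows "components V (insert {u,v} F) = insert (Cu \<union> Cv) (components V F - {Cu, Cv})"
proof -
  have linked: "component_of V (insert {u,v} F) a = Cu \<union> Cv"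
    if "reachable V F a u \<or> reachable V F a v" for a
    using that by (simp add: component_of_insert_edge[OF assms(1,2)] Cu_def Cv_def)
  have other: "component_of V (insert {u,v} F) a = component_of V F a"
    if "\<not> reachable V F a u" "\<not> reachable V F a v" for a
    using that by (simp add: component_of_insert_edge[OF assms(1,2)])
  have "component_of V (insert {u,v} F) a \<in> insert (Cu \<union> Cv) (components V F - {Cu, Cv})"
    if "a \<in> V" for a
  proof (cases "reachable V F a u \<or> reachable V F a v")
    case True
    then show ?thesis
      using linked by simp
  next
    case False
    then have "component_of V F a \<noteq> Cu" "component_of V F a \<noteq> Cv"
      by (simp_all add: component_of_eq_iff Cu_def Cv_def)
    with False show ?thesis
      using other \<open>a \<in> V\<close> by (simp add: components_def)
  qed
  moreover have "component_of V F a \<in> components V (insert {u,v} F)"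
    if "a \<in> V" "component_of V F a \<noteq> Cu" "component_of V F a \<noteq> Cv" for a
  proof -
    have "component_of V F a = component_of V (insert {u,v} F) a"
      using that other[of a] by (simp add: component_of_eq_iff Cu_def Cv_def)
    then show ?thesis
      using \<open>a \<in> V\<close> by (auto simp: components_def)
  qed
  moreover have "Cu \<union> Cv \<in> components V (insert {u,v} F)"
    using linked[of u] assms(1) by (auto simp: components_def)
  ultimately show ?thesis
    unfolding components_def[of V F] by (auto simp: components_def[of V "insert {u,v} F"])
qed
lemma num_components_insert_edge_unreachable:
  assumes "finite V" "u \<in> V" "v \<in> V" "\<not> reachable V F u v"
  shows "num_components V F = num_components V (insert {u,v} F) + 1"
proof -
  define Cu where "Cu = component_of V F u"
  define Cv where "Cv = component_of V F v"
  let ?C = "components V F"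
  have finite: "finite ?C"
    using assms(1) by (simp add: components_def)
  have in_C: "{Cu, Cv} \<subseteq> ?C"
    using assms(2,3) by (auto simp: components_def Cu_def Cv_def)
  have distinct: "Cu \<noteq> Cv"
    using assms(4) component_of_eq_iff unfolding Cu_def Cv_def by metis
  have "Cu \<union> Cv \<notin> ?C"
  proof
    assume "Cu \<union> Cv \<in> ?C"
    then obtain a where "Cu \<union> Cv = component_of V F a"
      by (auto simp: components_def)
    then have "reachable V F a u" "reachable V F a v"
      unfolding Cu_def Cv_def by blast+
    with assms(4) show False
      by (meson reachable_sym rtranclp_trans)
  qed
  then have "card (components V (insert {u,v} F)) = card (?C - {Cu, Cv}) + 1"
    using components_insert_edge[OF assms(2,3)] finite by (simp add: Cu_def Cv_def)
  also have "\<dots> + 1 = card ?C"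
    using card_mono[OF finite in_C] finite in_C distinct by (simp add: card_Diff_subset)
  finally show ?thesis
    by (simp add: num_components_def)
qed

lemma ell_insert_edge:
  assumes "finite V" "u \<in> V" "v \<in> V" "finite F" "{u,v} \<notin> F"
  shows "ell V (insert {u,v} F) = ell V F + (if reachable V F u v then 1 else 0)"
proof (cases "reachable V F u v")
  case True
  moreover have "component_of V F u \<in> components V F"
    using assms(2) by (simp add: components_def)
  ultimately have "components V (insert {u,v} F) = components V F"
    using components_insert_edge[OF assms(2,3), of F] component_of_eq_iff[of V F u v]
    by (simp add: insert_absorb)
  then show ?thesis
    using True assms(4,5) by (simp add: ell_def num_components_def)
next
  case False
  then show ?thesis
    using num_components_insert_edge_unreachable[OF assms(1-3) False] assms(4,5)
    by (simp add: ell_def)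
qed

lemma simple_graph_finite_edges: "simple_graph V E \<Longrightarrow> finite E"
  unfolding simple_graph_def
  by (rule finite_subset[of _ "Pow V"]) auto

lemma simple_graph_subset: "simple_graph V E \<Longrightarrow> D \<subseteq> E \<Longrightarrow> simple_graph V D"
  unfolding simple_graph_def by blast

lemma simple_graph_insertE:
  assumes "simple_graph V (insert e D)"
  obtains u v where "e = {u,v}" "u \<in> V" "v \<in> V" "simple_graph V D"
  using assms simple_graph_subset[OF assms, of D] unfolding simple_graph_def by blast

lemma ell_mono:
  assumes "simple_graph V D" "finite F"
  shows "ell V F \<le> ell V (F \<union> D)"
  using simple_graph_finite_edges[OF assms(1)] assms
proof (induction D rule: finite_induct)
  case (insert e D)
  obtain u v where e: "e = {u,v}" "u \<in> V" "v \<in> V" and D: "simple_graph V D"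
    using insert.prems(1) by (rule simple_graph_insertE)
  have "finite V"
    using D by (simp add: simple_graph_def)
  then have "ell V (F \<union> D) \<le> ell V (F \<union> insert e D)"
    using ell_insert_edge[of V u v "F \<union> D"] e insert.hyps(1) insert.prems(2)
    by (cases "e \<in> F \<union> D") (auto simp: insert_absorb)
  then show ?case
    using insert.IH D insert.prems(2) by simp
qed simp

lemma ell_supermodular:
  assumes "simple_graph V D" "finite F'" "F \<subseteq> F'" "D \<inter> F' = {}"
  shows "ell V (F \<union> D) - ell V F \<le> ell V (F' \<union> D) - ell V F'"
  using simple_graph_finite_edges[OF assms(1)] assms
proof (induction D rule: finite_induct)
  case (insert e D)
  obtain u v where e: "e = {u,v}" "u \<in> V" "v \<in> V" and D: "simple_graph V D"
    using insert.prems(1) by (rule simple_graph_insertE)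
  have "finite V" "finite F"
    using D insert.prems(2,3) finite_subset by (auto simp: simple_graph_def)
  moreover have "e \<notin> F \<union> D" "e \<notin> F' \<union> D"
    using insert.hyps(2) insert.prems(3,4) by auto
  ultimately have
    "ell V (F \<union> insert e D) = ell V (F \<union> D) + (if reachable V (F \<union> D) u v then 1 else 0)"
    "ell V (F' \<union> insert e D) = ell V (F' \<union> D) + (if reachable V (F' \<union> D) u v then 1 else 0)"
    using ell_insert_edge[of V u v] e insert.hyps(1) insert.prems(2) by simp_all
  moreover have "reachable V (F \<union> D) u v \<Longrightarrow> reachable V (F' \<union> D) u v"
    using reachable_mono[of "F \<union> D" "F' \<union> D"] insert.prems(3) by auto
  ultimately show ?case
    using insert.IH D insert.prems by auto
qed simp

lemma ell_remove_isolated: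
  assumes "finite V" "x \<in> V" "\<forall>e\<in>F. x \<notin> e"
  shows "ell (V - {x}) F = ell V F"
proof -
  have adj_eq: "adj (V - {x}) F = adj V F"
    using assms(3) by (auto simp: adj_def fun_eq_iff)
  have "reachable V F x b \<Longrightarrow> b = x" for b
    by (erule converse_rtranclpE) (use assms(3) in \<open>auto simp: adj_def\<close>)
  then have "component_of V F x = {x}"
    by auto
  then have "components V F = insert {x} (components (V - {x}) F)"
    unfolding components_def adj_eq using assms(2) by auto
  moreover have "{x} \<notin> components (V - {x}) F"
    unfolding components_def adj_eq by fastforce
  moreover have "finite (components (V - {x}) F)"
    using assms(1) by (simp add: components_def)
  ultimately have "num_components V F = num_components (V - {x}) F + 1"
    by (simp add: num_components_def)
  moreover have "card (V - {x}) + 1 = card V"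
    using card_Suc_Diff1[OF assms(1,2)] by simp
  ultimately show ?thesis
    by (simp add: ell_def)
qed

lemma card_del_vertex_E_add_degree:
  assumes "finite E"
  shows "card E = card (del_vertex_E E x) + degree E x"
proof -
  have "card (del_vertex_E E x \<union> {e\<in>E. x \<in> e}) = card (del_vertex_E E x) + degree E x"
    using assms unfolding degree_def
    by (intro card_Un_disjoint) (auto simp: del_vertex_E_def)
  moreover have "del_vertex_E E x \<union> {e\<in>E. x \<in> e} = E"
    by (auto simp: del_vertex_E_def)
  ultimately show ?thesis
    by simp
qed

lemma tree_like_iff_ell:
  assumes "simple_graph V E" "x \<in> V"
  shows "tree_like V E x \<longleftrightarrow> ell V (del_vertex_E E x) = ell V E"
proof -
  have "finite V" "finite E"
    using assms(1) simple_graph_finite_edges by (auto simp: simple_graph_def)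
  have "ell (V - {x}) (del_vertex_E E x) = ell V (del_vertex_E E x)"
    using ell_remove_isolated[OF \<open>finite V\<close> assms(2)] by (simp add: del_vertex_E_def)
  moreover have "card E = card (del_vertex_E E x) + degree E x"
    using card_del_vertex_E_add_degree[OF \<open>finite E\<close>] .
  moreover have "card (V - {x}) + 1 = card V"
    using card_Suc_Diff1[OF \<open>finite V\<close> assms(2)] by simp
  ultimately show ?thesis
    using assms(2) by (auto simp: tree_like_def ell_def del_vertex_V_def)
qed

lemma simple_graph_del_vertex:
  "simple_graph V E \<Longrightarrow> simple_graph (V - {y}) (del_vertex_E E y)"
  unfolding simple_graph_def del_vertex_E_def by fastforce

lemma tree_like_del_vertex:
  assumes G: "simple_graph V E" and "tree_like V E x" "y \<in> V" "y \<noteq> x"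
  shows "tree_like (V - {y}) (del_vertex_E E y) x"
proof -
  have "x \<in> V" "finite V" "finite E"
    using assms simple_graph_finite_edges by (auto simp: tree_like_def simple_graph_def)
  define Ey where "Ey = del_vertex_E E y"
  define F where "F = del_vertex_E Ey x"
  define F' where "F' = del_vertex_E E x"
  define D where "D = {e\<in>E. x \<in> e \<and> y \<notin> e}"
  have D: "simple_graph V D"
    using simple_graph_subset[OF G] by (simp add: D_def)
  have "finite F" "finite F'" "finite (F' \<union> D)"
    using \<open>finite E\<close> by (simp_all add: F_def F'_def D_def Ey_def del_vertex_E_def)
  have "F \<subseteq> F'" "D \<inter> F' = {}" "F' \<union> D \<union> E = E" "F \<union> D = Ey"
    by (auto simp: F_def F'_def D_def Ey_def del_vertex_E_def)
  have "ell V (F \<union> D) - ell V F \<le> ell V (F' \<union> D) - ell V F'"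
    by (rule ell_supermodular[OF D \<open>finite F'\<close> \<open>F \<subseteq> F'\<close> \<open>D \<inter> F' = {}\<close>])
  also have "\<dots> \<le> ell V E - ell V F'"
    using ell_mono[OF G \<open>finite (F' \<union> D)\<close>] \<open>F' \<union> D \<union> E = E\<close> by simp
  also have "\<dots> = 0"
    using tree_like_iff_ell[OF G \<open>x \<in> V\<close>] assms(2) by (simp add: F'_def)
  finally have "ell V F = ell V Ey"
    using ell_mono[OF D \<open>finite F\<close>] \<open>F \<union> D = Ey\<close> by simp
  moreover have "ell (V - {y}) F = ell V F" "ell (V - {y}) Ey = ell V Ey"
    using ell_remove_isolated[OF \<open>finite V\<close> \<open>y \<in> V\<close>]
    by (auto simp: F_def Ey_def del_vertex_E_def)
  ultimately show ?thesis
    using tree_like_iff_ell[OF simple_graph_del_vertex[OF G]] \<open>x \<in> V\<close> \<open>y \<noteq> x\<close>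
    by (simp add: F_def Ey_def)
qed

lemma ell_induced_tree_like:
  assumes "finite Y" "simple_graph V E" "Y \<subseteq> V" "\<forall>x\<in>Y. tree_like V E x"
  shows "ell (V - Y) (induced_E E (V - Y)) = ell V E"
  using assms
proof (induction Y arbitrary: V E rule: finite_induct)
  case empty
  then have "induced_E E V = E"
    by (auto simp: simple_graph_def induced_E_def)
  then show ?case
    by simp
next
  case (insert y Y)
  then have G: "simple_graph V E" and "y \<in> V" "tree_like V E y" "finite V"
    by (auto simp: simple_graph_def)
  have Y: "Y \<subseteq> V - {y}"
    using insert.hyps(2) insert.prems(2) by blast
  have "\<forall>x\<in>Y. tree_like (V - {y}) (del_vertex_E E y) x"
    using tree_like_del_vertex[OF G _ \<open>y \<in> V\<close>] insert.hyps(2) insert.prems(3) by blast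
  then have "ell (V - {y} - Y) (induced_E (del_vertex_E E y) (V - {y} - Y))
      = ell (V - {y}) (del_vertex_E E y)"
    by (rule insert.IH[OF simple_graph_del_vertex[OF G] Y])
  moreover have "V - {y} - Y = V - insert y Y"
    by blast
  moreover have "induced_E (del_vertex_E E y) (V - insert y Y) = induced_E E (V - insert y Y)"
    by (auto simp: induced_E_def del_vertex_E_def)
  moreover have "ell (V - {y}) (del_vertex_E E y) = ell V (del_vertex_E E y)"
    using ell_remove_isolated[OF \<open>finite V\<close> \<open>y \<in> V\<close>] by (simp add: del_vertex_E_def)
  moreover have "ell V (del_vertex_E E y) = ell V E"
    using tree_like_iff_ell[OF G \<open>y \<in> V\<close>] \<open>tree_like V E y\<close> by simp
  ultimately show ?case
    by simp
qed

theorem proposition6p1: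
  fixes V :: "'a set" and E :: "'a set set"
  assumes "simple_graph V E"
  shows "(\<forall>x y. tree_like V E x \<and> y \<in> V \<and> y \<noteq> x \<longrightarrow>
            tree_like (del_vertex_V V y) (del_vertex_E E y) x)
       \<and> (\<forall>Y. Y \<subseteq> V \<and> (\<forall>x\<in>Y. tree_like V E x) \<longrightarrow>
            ell (V - Y) (induced_E E (V - Y)) = ell V E)"
proof (intro conjI allI impI; elim conjE)
  show "tree_like (del_vertex_V V y) (del_vertex_E E y) x"
    if "tree_like V E x" "y \<in> V" "y \<noteq> x" for x y
    using tree_like_del_vertex[OF assms that] by (simp add: del_vertex_V_def)
  show "ell (V - Y) (induced_E E (V - Y)) = ell V E"
    if "Y \<subseteq> V" "\<forall>x\<in>Y. tree_like V E x" for Y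
    using ell_induced_tree_like[OF _ assms that] finite_subset[OF that(1)] assms
    by (simp add: simple_graph_def)
qed

end
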